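(* Let $G$ be a graph and $t$ a positive integer. If $\varphi(G)\ge t$, then $G$ contains an induced subgraph which is a minimal b-$t$-atom.
   Context: A proper $k$-coloring of $G$ is a surjective map $c:V(G)\to\{1,\ldots,k\}$ with $c(u)\ne c(v)$ for every edge $uv$. In a proper $k$-coloring, a vertex of color $i$ is a b-vertex if it has a neighbor of every color $j\in\{1,\ldots,k\}\setminus\{i\}$. A b-$k$-coloring is a proper $k$-coloring in which every color class contains a b-vertex; the b-chromatic number $\varphi(G)$ is the largest $k$ such that $G$ has a b-$k$-coloring. A b-$t$-atom is a graph $A$ whose vertex set can be partitioned into $t$ sets $D_1,\ldots,D_t$, each $D_i$ containing a special vertex $c_i$, such that each $D_i$ is independent with $|D_i|\le t$ and, for all $i\ne j$, $c_i$ has a neighbor in $D_j$. A b-$t$-atom is minimal if no proper induced subgraph of it is a b-$t$-atom. *)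

theory Defs
  imports Main
begin

definition graph :: "'a set \<Rightarrow> ('a \<Rightarrow> 'a \<Rightarrow> bool) \<Rightarrow> bool" where
  "graph V E \<longleftrightarrow> finite V \<and> (\<forall>u v. E u v \<longrightarrow> u \<in> V \<and> v \<in> V)
     \<and> (\<forall>u v. E u v \<longrightarrow> E v u) \<and> (\<forall>v. \<not> E v v)"

definition induced :: "('a \<Rightarrow> 'a \<Rightarrow> bool) \<Rightarrow> 'a set \<Rightarrow> 'a \<Rightarrow> 'a \<Rightarrow> bool" where
  "induced E S = (\<lambda>u v. E u v \<and> u \<in> S \<and> v \<in> S)"

definition proper_coloring :: "'a set \<Rightarrow> ('a \<Rightarrow> 'a \<Rightarrow> bool) \<Rightarrow> ('a \<Rightarrow> nat) \<Rightarrow> nat \<Rightarrow> bool" where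
  "proper_coloring V E c k \<longleftrightarrow> c ` V = {1..k}
     \<and> (\<forall>u\<in>V. \<forall>v\<in>V. E u v \<longrightarrow> c u \<noteq> c v)"

definition b_vertex :: "'a set \<Rightarrow> ('a \<Rightarrow> 'a \<Rightarrow> bool) \<Rightarrow> ('a \<Rightarrow> nat) \<Rightarrow> nat \<Rightarrow> 'a \<Rightarrow> bool" where
  "b_vertex V E c k v \<longleftrightarrow> (\<forall>j\<in>{1..k} - {c v}. \<exists>u\<in>V. E v u \<and> c u = j)"

definition b_coloring :: "'a set \<Rightarrow> ('a \<Rightarrow> 'a \<Rightarrow> bool) \<Rightarrow> ('a \<Rightarrow> nat) \<Rightarrow> nat \<Rightarrow> bool" where
  "b_coloring V E c k \<longleftrightarrow> proper_coloring V E c k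
     \<and> (\<forall>i\<in>{1..k}. \<exists>v\<in>V. c v = i \<and> b_vertex V E c k v)"

definition b_chromatic_number :: "'a set \<Rightarrow> ('a \<Rightarrow> 'a \<Rightarrow> bool) \<Rightarrow> nat" where
  "b_chromatic_number V E = Max {k. \<exists>c. b_coloring V E c k}"

definition b_atom :: "'a set \<Rightarrow> ('a \<Rightarrow> 'a \<Rightarrow> bool) \<Rightarrow> nat \<Rightarrow> bool" where
  "b_atom V E t \<longleftrightarrow> (\<exists>(D :: nat \<Rightarrow> 'a set) (cv :: nat \<Rightarrow> 'a).
      (\<Union>i\<in>{1..t}. D i) = V
    \<and> (\<forall>i\<in>{1..t}. \<forall>j\<in>{1..t}. i \<noteq> j \<longrightarrow> D i \<inter> D j = {})
    \<and> (\<forall>i\<in>{1..t}. cv i \<in> D i \<and> card (D i) \<le> t \<and> (\<forall>u\<in>D i. \<forall>v\<in>D i. \<not> E u v))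
    \<and> (\<forall>i\<in>{1..t}. \<forall>j\<in>{1..t}. i \<noteq> j \<longrightarrow> (\<exists>u\<in>D j. E (cv i) u)))"

definition minimal_b_atom :: "'a set \<Rightarrow> ('a \<Rightarrow> 'a \<Rightarrow> bool) \<Rightarrow> nat \<Rightarrow> bool" where
  "minimal_b_atom V E t \<longleftrightarrow> b_atom V E t \<and> (\<forall>S. S \<subset> V \<longrightarrow> \<not> b_atom S (induced E S) t)"

end

theory Submission
  imports Defs
begin

text \<open>In a b-coloring with at least t colours pick b-vertices \<open>c\<^sub>1, \<dots>, c\<^sub>t\<close> of colours
  \<open>1, \<dots>, t\<close> and, for \<open>i \<noteq> j\<close>, a neighbour of \<open>c\<^sub>i\<close> of colour j. The colour classes of these
  at most \<open>t\<^sup>2\<close> vertices form a b-t-atom, and by finiteness it contains a minimal one.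
  That \<open>\<phi>(G)\<close> is attained at all rests on the classical fact that a proper coloring with the
  fewest colours is a b-coloring: a colour class without b-vertex could be recoloured
  vertex by vertex, freeing a colour.\<close>

definition proper_coloring_into :: "'a set \<Rightarrow> ('a \<Rightarrow> 'a \<Rightarrow> bool) \<Rightarrow> ('a \<Rightarrow> nat) \<Rightarrow> nat \<Rightarrow> bool" where
  "proper_coloring_into V E c k \<longleftrightarrow> c ` V \<subseteq> {1..k} \<and> (\<forall>u\<in>V. \<forall>v\<in>V. E u v \<longrightarrow> c u \<noteq> c v)"

lemma proper_coloring_into_drop_unused_colour:
  assumes "proper_coloring_into V E c k" "i \<in> {1..k}" "\<forall>v\<in>V. c v \<noteq> i"
  shows "\<exists>c'. proper_coloring_into V E c' (k - 1)"
proof -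
  define shift where "shift m = (if m < i then m else m - 1)" for m :: nat
  have inj: "inj_on shift ({1..k} - {i})" unfolding inj_on_def shift_def by auto
  have range: "c v \<in> {1..k} - {i}" if "v \<in> V" for v
    using assms that unfolding proper_coloring_into_def by auto
  have "proper_coloring_into V E (shift \<circ> c) (k - 1)"
    unfolding proper_coloring_into_def
  proof (intro conjI ballI impI subsetI)
    fix x assume "x \<in> (shift \<circ> c) ` V"
    then obtain v where "v \<in> V" "x = shift (c v)" by auto
    with range[OF this(1)] assms(2) show "x \<in> {1..k-1}" unfolding shift_def by auto
  next
    fix u v assume uv: "u \<in> V" "v \<in> V" "E u v"
    then have "c u \<noteq> c v" using assms(1) unfolding proper_coloring_into_def by auto
    then show "(shift \<circ> c) u \<noteq> (shift \<circ> c) v"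
      using inj_onD[OF inj] range[OF uv(1)] range[OF uv(2)] by auto
  qed
  then show ?thesis by blast
qed

lemma proper_coloring_into_card:
  assumes "graph V E"
  shows "\<exists>c. proper_coloring_into V E c (card V)"
proof -
  obtain h where "bij_betw h {0..<card V} V"
    using assms ex_bij_betw_nat_finite unfolding graph_def by blast
  then have "bij_betw (the_inv_into {0..<card V} h) V {0..<card V}"
    by (rule bij_betw_the_inv_into)
  then have "bij_betw (Suc \<circ> the_inv_into {0..<card V} h) V {1..card V}"
    by (rule bij_betw_trans)
      (simp add: bij_betw_def image_Suc_atLeastLessThan atLeastLessThanSuc_atLeastAtMost)
  then obtain f where f: "inj_on f V" "f ` V = {1..card V}" unfolding bij_betw_def by blast
  have irr: "\<not> E v v" for v using assms unfolding graph_def by blast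
  have "proper_coloring_into V E f (card V)"
    unfolding proper_coloring_into_def
  proof (intro conjI ballI impI)
    show "f ` V \<subseteq> {1..card V}" using f(2) by simp
    fix u v assume uv: "u \<in> V" "v \<in> V" "E u v"
    then have "u \<noteq> v" using irr by blast
    then show "f u \<noteq> f v" using inj_on_contraD[OF f(1)] uv by blast
  qed
  then show ?thesis by blast
qed

text \<open>Each vertex of colour i that is not a b-vertex misses some other colour in its
  neighbourhood and can take it; the class of colour i is independent, so these moves
  do not interfere.\<close>
lemma recolour_class_without_b_vertex:
  assumes sym: "\<And>u v. E u v \<Longrightarrow> E v u"
    and c: "proper_coloring_into V E c k"
    and no_b: "\<And>v. v \<in> V \<Longrightarrow> c v = i \<Longrightarrow> \<not> b_vertex V E c k v"
  shows "\<exists>c'. proper_coloring_into V E c' k \<and> (\<forall>v\<in>V. c' v \<noteq> i)"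
proof -
  have "\<exists>j. j \<in> {1..k} - {c v} \<and> \<not> (\<exists>u\<in>V. E v u \<and> c u = j)" if "v \<in> V" "c v = i" for v
    using no_b[OF that] unfolding b_vertex_def by blast
  then obtain m where m: "\<And>v. v \<in> V \<Longrightarrow> c v = i \<Longrightarrow>
      m v \<in> {1..k} - {c v} \<and> \<not> (\<exists>u\<in>V. E v u \<and> c u = m v)"
    by metis
  define c' where "c' v = (if c v = i then m v else c v)" for v
  have "proper_coloring_into V E c' k"
    unfolding proper_coloring_into_def
  proof (intro conjI ballI impI subsetI)
    fix x assume "x \<in> c' ` V"
    then show "x \<in> {1..k}" using m c unfolding c'_def proper_coloring_into_def by auto
  next
    fix u v assume uv: "u \<in> V" "v \<in> V" "E u v"
    have "c u \<noteq> c v" using c uv unfolding proper_coloring_into_def by auto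
    then show "c' u \<noteq> c' v"
      using m[OF uv(1)] m[OF uv(2)] uv sym[OF uv(3)] unfolding c'_def by auto
  qed
  moreover have "\<forall>v\<in>V. c' v \<noteq> i" using m unfolding c'_def by auto
  ultimately show ?thesis by blast
qed

lemma minimum_coloring_is_b_coloring:
  assumes sym: "\<And>u v. E u v \<Longrightarrow> E v u"
    and c: "proper_coloring_into V E c k"
    and fewest: "\<And>k' c'. k' < k \<Longrightarrow> \<not> proper_coloring_into V E c' k'"
  shows "b_coloring V E c k"
proof -
  have onto: "c ` V = {1..k}"
  proof (rule ccontr)
    assume "c ` V \<noteq> {1..k}"
    moreover have "c ` V \<subseteq> {1..k}" using c unfolding proper_coloring_into_def by blast
    ultimately obtain i where "i \<in> {1..k}" "i \<notin> c ` V" by blast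
    then show False
      using proper_coloring_into_drop_unused_colour[OF c] fewest[of "k - 1"] by auto
  qed
  have "\<exists>v\<in>V. c v = i \<and> b_vertex V E c k v" if i: "i \<in> {1..k}" for i
  proof (rule ccontr)
    assume "\<not> ?thesis"
    then obtain c' where c': "proper_coloring_into V E c' k" "\<forall>v\<in>V. c' v \<noteq> i"
      using recolour_class_without_b_vertex[OF sym c] by blast
    then show False
      using proper_coloring_into_drop_unused_colour[OF c'(1) i c'(2)] i fewest[of "k - 1"] by auto
  qed
  with onto c show ?thesis
    unfolding b_coloring_def proper_coloring_def proper_coloring_into_def by blast
qed

lemma b_coloring_exists:
  assumes "graph V E"
  shows "\<exists>k c. b_coloring V E c k"
proof -
  have ex: "\<exists>k c. proper_coloring_into V E c k"
    using proper_coloring_into_card[OF assms] by blast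
  define k where "k = (LEAST k. \<exists>c. proper_coloring_into V E c k)"
  obtain c where c: "proper_coloring_into V E c k"
    unfolding k_def using LeastI_ex[OF ex] by blast
  have "\<not> proper_coloring_into V E c' k'" if "k' < k" for k' c'
    using not_less_Least[of k'] that unfolding k_def by auto
  then have "b_coloring V E c k"
    using minimum_coloring_is_b_coloring[OF _ c] assms unfolding graph_def by metis
  then show ?thesis by blast
qed

lemma b_chromatic_number_attained:
  assumes "graph V E"
  shows "\<exists>c. b_coloring V E c (b_chromatic_number V E)"
proof -
  let ?K = "{k. \<exists>c. b_coloring V E c k}"
  have "?K \<subseteq> {..card V}"
  proof
    fix k assume "k \<in> ?K"
    then obtain c where "c ` V = {1..k}" unfolding b_coloring_def proper_coloring_def by auto
    then show "k \<in> {..card V}"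
      using card_image_le[of V c] assms unfolding graph_def by simp
  qed
  then have "finite ?K" by (rule finite_subset) simp
  then have "Max ?K \<in> ?K" using b_coloring_exists[OF assms] by (intro Max_in) auto
  then show ?thesis unfolding b_chromatic_number_def by blast
qed

lemma b_atom_of_rainbow_neighbours:
  assumes proper: "\<And>u v. u \<in> V \<Longrightarrow> v \<in> V \<Longrightarrow> E u v \<Longrightarrow> c u \<noteq> c v"
    and cv: "\<And>i. i \<in> {1..t} \<Longrightarrow> cv i \<in> V \<and> c (cv i) = i"
    and w: "\<And>i j. i \<in> {1..t} \<Longrightarrow> j \<in> {1..t} \<Longrightarrow> i \<noteq> j \<Longrightarrow>
      w i j \<in> V \<and> E (cv i) (w i j) \<and> c (w i j) = j"
    and D_eq: "\<And>j. D j = insert (cv j) ((\<lambda>i. w i j) ` ({1..t} - {j}))"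
  shows "b_atom (\<Union>j\<in>{1..t}. D j) (induced E (\<Union>j\<in>{1..t}. D j)) t"
proof -
  let ?S = "\<Union>j\<in>{1..t}. D j"
  have D_colour: "x \<in> V \<and> c x = j" if "j \<in> {1..t}" "x \<in> D j" for j x
    using that cv w unfolding D_eq by auto
  show ?thesis
    unfolding b_atom_def
  proof (intro exI[of _ D] exI[of _ cv] conjI ballI impI)
    show "\<And>i j. i \<in> {1..t} \<Longrightarrow> j \<in> {1..t} \<Longrightarrow> i \<noteq> j \<Longrightarrow> D i \<inter> D j = {}"
      using D_colour by blast
  next
    fix i assume i: "i \<in> {1..t}"
    show "cv i \<in> D i" unfolding D_eq by simp
    have "card (D i) \<le> Suc (card ((\<lambda>j. w j i) ` ({1..t} - {i})))"
      unfolding D_eq by (simp add: card_insert_if)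
    also have "\<dots> \<le> Suc (card ({1..t} - {i}))" by (simp add: card_image_le)
    finally show "card (D i) \<le> t" using i by simp
    fix u v assume "u \<in> D i" "v \<in> D i"
    then show "\<not> induced E ?S u v" using D_colour[OF i] proper unfolding induced_def by fastforce
  next
    fix i j assume ij: "i \<in> {1..t}" "j \<in> {1..t}" "i \<noteq> j"
    then have "w i j \<in> D j" "cv i \<in> ?S" unfolding D_eq by auto
    then show "\<exists>u\<in>D j. induced E ?S (cv i) u"
      using w[OF ij] ij unfolding induced_def by blast
  qed simp
qed

lemma b_coloring_contains_b_atom:
  assumes "b_coloring V E c k" and "t \<le> k"
  shows "\<exists>S\<subseteq>V. b_atom S (induced E S) t"
proof -
  have proper: "\<And>u v. u \<in> V \<Longrightarrow> v \<in> V \<Longrightarrow> E u v \<Longrightarrow> c u \<noteq> c v"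
    using assms(1) unfolding b_coloring_def proper_coloring_def by blast
  have "\<exists>v. v \<in> V \<and> c v = i \<and> b_vertex V E c k v" if "i \<in> {1..t}" for i
    using assms that unfolding b_coloring_def by auto
  then obtain cv where cv: "\<And>i. i \<in> {1..t} \<Longrightarrow> cv i \<in> V \<and> c (cv i) = i \<and> b_vertex V E c k (cv i)"
    by metis
  have "\<exists>u. u \<in> V \<and> E (cv i) u \<and> c u = j" if "i \<in> {1..t}" "j \<in> {1..t}" "i \<noteq> j" for i j
    using cv[OF that(1)] that assms(2) unfolding b_vertex_def by auto
  then obtain w where w: "\<And>i j. i \<in> {1..t} \<Longrightarrow> j \<in> {1..t} \<Longrightarrow> i \<noteq> j \<Longrightarrow>
      w i j \<in> V \<and> E (cv i) (w i j) \<and> c (w i j) = j"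
    by metis
  define D where "D j = insert (cv j) ((\<lambda>i. w i j) ` ({1..t} - {j}))" for j
  have "b_atom (\<Union>j\<in>{1..t}. D j) (induced E (\<Union>j\<in>{1..t}. D j)) t"
    using b_atom_of_rainbow_neighbours[OF proper _ w D_def] cv by simp
  moreover have "(\<Union>j\<in>{1..t}. D j) \<subseteq> V"
    unfolding D_def using cv w by (auto simp del: atLeastAtMost_iff)
  ultimately show ?thesis by blast
qed

lemma induced_induced: "S \<subseteq> T \<Longrightarrow> induced (induced E T) S = induced E S"
  unfolding induced_def by auto

lemma b_atom_contains_minimal_b_atom:
  assumes "finite S" and "b_atom S (induced E S) t"
  shows "\<exists>M\<subseteq>S. minimal_b_atom M (induced E M) t"
  using assms
proof (induction S rule: finite_psubset_induct)
  case (psubset S)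
  show ?case
  proof (cases "\<exists>S'. S' \<subset> S \<and> b_atom S' (induced E S') t")
    case True
    then obtain S' where "S' \<subset> S" "b_atom S' (induced E S') t" by blast
    then show ?thesis using psubset.IH[of S'] by blast
  next
    case False
    then have "minimal_b_atom S (induced E S) t"
      using psubset.prems unfolding minimal_b_atom_def by (simp add: induced_induced)
    then show ?thesis by blast
  qed
qed

theorem mainTheorem6:
  fixes V :: "'a set" and E :: "'a \<Rightarrow> 'a \<Rightarrow> bool" and t :: nat
  assumes "graph V E" and "t > 0" and "b_chromatic_number V E \<ge> t"
  shows "\<exists>S\<subseteq>V. minimal_b_atom S (induced E S) t"
proof -
  obtain c where "b_coloring V E c (b_chromatic_number V E)"
    using b_chromatic_number_attained[OF assms(1)] by blast
  from b_coloring_contains_b_atom[OF this assms(3)]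
  obtain S where S: "S \<subseteq> V" and atom: "b_atom S (induced E S) t" by blast
  have "finite S" using S assms(1) finite_subset unfolding graph_def by blast
  from b_atom_contains_minimal_b_atom[OF this atom] S show ?thesis by blast
qed

end
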